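(* Let $p\in[0,1)$, $\alpha\in[0,1]$, $0\le h_1<\dots<h_N\le1$, and nonnegative weights $f_0^S(h_j),f_0^{NS}(h_j)$, $j=1,\dots,N$, with $\sum_jf_0^S(h_j)=\sum_jf_0^{NS}(h_j)=1$; set $f_0(h_j)=\alpha f_0^S(h_j)+(1-\alpha)f_0^{NS}(h_j)$, assume $f_0(h_N)>0$, and let $f_0([h_i,1])=\sum_{j\ge i}f_0(h_j)$. Let $m_0^{S,j}\in[-1,1]$ be given numbers (mean opinions of stubborn individuals at level $h_j$). Let $f^{NS,1},\dots,f^{NS,N}\in C([0,+\infty),P([-1,1]))$ (weak topology) with initial data $f_0^{NS,i}$, write $m^{NS,j}(t)=\int_{-1}^1w\,f^{NS,j}(t,dw)$, $$m(t)=\alpha\sum_{j}f_0^S(h_j)m_0^{S,j}+(1-\alpha)\sum_jf_0^{NS}(h_j)m^{NS,j}(t),\quad \beta_i(t)=\alpha\sum_{j\ge i}f_0^S(h_j)m_0^{S,j}+(1-\alpha)\sum_{j\ge i}f_0^{NS}(h_j)m^{NS,j}(t),$$ and assume that for all $i$, $t\ge0$ and $\phi\in C^1([-1,1])$, $$\int\phi\,df^{NS,i}(t)=\int\phi\,df_0^{NS,i}+\int_0^t\!\!\int_{-1}^1\phi'(w)\Big[p\big(m(s)-w\big)+(1-p)\big(\beta_i(s)-f_0([h_i,1])w\big)\Big]f^{NS,i}(s,dw)\,ds.$$ Then for every $i=1,\dots,N$ and $t\ge0$, $$|\mathrm{conv}(\mathrm{supp}\,f^{NS,i}(t))|\le|\mathrm{conv}(\mathrm{supp}\,f_0^{NS,i})|\,e^{-(p+(1-p)f_0([h_i,1]))t},$$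 where $|\mathrm{conv}(\mathrm{supp}\,\mu)|$ is the length of the convex hull of the support of $\mu$.
   Context: $P([-1,1])$ is the set of Borel probability measures on $[-1,1]$. The model: $w$ is an opinion, $h_i$ the hierarchy levels, $\alpha$ the fraction of stubborn individuals, $f^{NS,i}(t)$ the opinion distribution of non-stubborn individuals at level $h_i$; $\beta_i(t)$ equals $f_0([h_i,1])$ times the mean opinion of all individuals of hierarchy at least $h_i$. *)

theory Defs
  imports "HOL-Probability.Probability"
begin

definition prob_m11 :: "real measure \<Rightarrow> bool" where
  "prob_m11 M \<longleftrightarrow> sets M = sets (restrict_space borel {-1..1::real}) \<and> prob_space M"

definition weakly_cont_m11 :: "(real \<Rightarrow> real measure) \<Rightarrow> bool" where
  "weakly_cont_m11 f \<longleftrightarrow>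
     (\<forall>g::real \<Rightarrow> real. continuous_on {-1..1} g \<longrightarrow> continuous_on {0..} (\<lambda>t. \<integral>w. g w \<partial>(f t)))"

definition supp_m :: "real measure \<Rightarrow> real set" where
  "supp_m M = {x \<in> {-1..1}. \<forall>e>0. emeasure M (ball x e \<inter> {-1..1}) > 0}"

definition conv_supp_len :: "real measure \<Rightarrow> real" where
  "conv_supp_len M = measure lborel (convex hull (supp_m M))"

definition C1_m11 :: "(real \<Rightarrow> real) \<Rightarrow> (real \<Rightarrow> real) \<Rightarrow> bool" where
  "C1_m11 \<phi> \<phi>' \<longleftrightarrow> continuous_on {-1..1} \<phi>' \<and>
     (\<forall>w\<in>{-1..1}. (\<phi> has_real_derivative \<phi>' w) (at w within {-1..1}))"

end

theory Submission
  imports Defs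
begin

text \<open>
  At level \<open>i\<close> the non-stubborn opinions are transported by the affine velocity field
  \<open>w \<mapsto> c(t) - \<kappa> w\<close>, with \<open>\<kappa> = p + (1 - p) f\<^sub>0([h\<^sub>i,1])\<close> and
  \<open>c(t) = p m(t) + (1 - p) \<beta>\<^sub>i(t)\<close>, which contracts distances at rate \<open>\<kappa>\<close>.
  Polynomial test functions suffice to see this: if \<open>y' = c - \<kappa> y\<close>, the central moments
  \<open>\<Phi>\<^sub>n(t) = \<integral> (w - y(t))^n d\<mu>\<^sub>t\<close> satisfy \<open>\<Phi>\<^sub>n' = -n \<kappa> \<Phi>\<^sub>n\<close>. Starting \<open>y\<close> at the midpoint
  of the initial hull \<open>[a,b]\<close>, the even moments at time \<open>t\<close> are at most \<open>(r e^(-\<kappa>t))^(2k)\<close>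
  with \<open>r = (b - a)/2\<close>, and letting \<open>k \<rightarrow> \<infinity>\<close> confines the support at time \<open>t\<close> to the
  interval of radius \<open>r e^(-\<kappa>t)\<close> around \<open>y(t)\<close>.
\<close>

lemma prob_m11_space: "prob_m11 M \<Longrightarrow> space M = {-1..1}"
  unfolding prob_m11_def by (metis sets_eq_imp_space_eq space_borel space_restrict_space Int_UNIV_right)

lemma prob_m11_prob_space: "prob_m11 M \<Longrightarrow> prob_space M"
  unfolding prob_m11_def by simp

lemma prob_m11_ball_sets: "prob_m11 M \<Longrightarrow> ball x e \<inter> {-1..1} \<in> sets M"
  unfolding prob_m11_def by (auto simp: sets_restrict_space)

lemma prob_m11_integrable_continuous:
  assumes M: "prob_m11 M" and g: "continuous_on {-1..1} (g :: real \<Rightarrow> real)"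
  shows "integrable M g"
proof -
  interpret prob_space M using prob_m11_prob_space[OF M] .
  have "g \<in> borel_measurable (restrict_space borel {-1..1})"
    by (rule borel_measurable_continuous_on_restrict[OF g])
  then have meas: "g \<in> borel_measurable M"
    using M unfolding prob_m11_def by (metis measurable_cong_sets)
  obtain B where "\<forall>x\<in>{-1..1}. norm (g x) \<le> B"
    using compact_imp_bounded[OF compact_continuous_image[OF g compact_Icc]]
    unfolding bounded_iff by auto
  then show ?thesis
    using prob_m11_space[OF M] by (intro integrable_const_bound[where B=B] AE_I2 meas) auto
qed

lemma integral_sum_continuous:
  assumes "prob_m11 M" "\<And>j. j \<in> J \<Longrightarrow> continuous_on {-1..1} (g j :: real \<Rightarrow> real)"
  shows "(\<integral>w. (\<Sum>j\<in>J. g j w) \<partial>M) = (\<Sum>j\<in>J. \<integral>w. g j w \<partial>M)"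
  using assms by (intro Bochner_Integration.integral_sum prob_m11_integrable_continuous)

lemma closed_supp_m: "prob_m11 M \<Longrightarrow> closed (supp_m M)"
  unfolding closed_limpt
proof (intro allI impI)
  fix x assume M: "prob_m11 M" and lp: "x islimpt supp_m M"
  have "supp_m M \<subseteq> {-1..1}" unfolding supp_m_def by auto
  then have "x \<in> {-1..1}"
    using lp islimpt_subset closed_limpt[of "{-1..1::real}"] by blast
  moreover have "emeasure M (ball x e \<inter> {-1..1}) > 0" if "e > 0" for e
  proof -
    obtain y where y: "y \<in> supp_m M" "dist y x < e/2"
      using lp \<open>e > 0\<close> unfolding islimpt_approachable by (meson half_gt_zero)
    then have "ball y (e/2) \<subseteq> ball x e"
      by (simp add: ball_subset_ball_iff dist_commute)
    then have "emeasure M (ball y (e/2) \<inter> {-1..1}) \<le> emeasure M (ball x e \<inter> {-1..1})"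
      using prob_m11_ball_sets[OF M] by (intro emeasure_mono) auto
    moreover have "emeasure M (ball y (e/2) \<inter> {-1..1}) > 0"
      using y(1) \<open>e > 0\<close> unfolding supp_m_def by auto
    ultimately show ?thesis by order
  qed
  ultimately show "x \<in> supp_m M" unfolding supp_m_def by auto
qed

text \<open>The complement of the support is covered by countably many null balls (Lindelof).\<close>
lemma AE_in_supp_m:
  assumes M: "prob_m11 M" shows "AE x in M. x \<in> supp_m M"
proof -
  define F where "F = {ball x e | x e. e > 0 \<and> emeasure M (ball x e \<inter> {-1..1}) = 0}"
  obtain F' where F': "F' \<subseteq> F" "countable F'" "\<Union>F' = \<Union>F"
    using Lindelof[of F] unfolding F_def by auto
  have "(\<Union>B\<in>F'. B \<inter> {-1..1}) \<in> null_sets M"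
  proof (rule null_sets_UN')
    fix B assume "B \<in> F'"
    then show "B \<inter> {-1..1} \<in> null_sets M"
      using F'(1) prob_m11_ball_sets[OF M] unfolding F_def by auto
  qed fact
  moreover have "{x \<in> space M. x \<notin> supp_m M} \<subseteq> (\<Union>B\<in>F'. B \<inter> {-1..1})"
  proof
    fix x assume x: "x \<in> {x \<in> space M. x \<notin> supp_m M}"
    then have "x \<in> {-1..1}" using prob_m11_space[OF M] by auto
    moreover obtain e where "e > 0" "emeasure M (ball x e \<inter> {-1..1}) = 0"
      using x \<open>x \<in> {-1..1}\<close> unfolding supp_m_def by (auto simp: not_less)
    then have "x \<in> \<Union>F'" unfolding F'(3) F_def by force
    ultimately show "x \<in> (\<Union>B\<in>F'. B \<inter> {-1..1})" by auto
  qed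
  ultimately show ?thesis by (rule AE_I')
qed

lemma supp_m_nonempty: "prob_m11 M \<Longrightarrow> supp_m M \<noteq> {}"
  using AE_in_supp_m prob_space.AE_False[OF prob_m11_prob_space] by fastforce

lemma convex_hull_supp_m_interval:
  assumes M: "prob_m11 M"
  obtains a b where "a \<le> b" "convex hull (supp_m M) = {a..b}"
proof -
  have "bounded (supp_m M)"
    by (rule bounded_subset[of "{-1..1}"]) (auto simp: supp_m_def)
  then have "compact (convex hull (supp_m M))"
    using closed_supp_m[OF M] by (intro compact_convex_hull) (simp add: compact_eq_bounded_closed)
  then obtain a b where ab: "convex hull (supp_m M) = {a..b}"
    using connected_compact_interval_1 convex_connected convex_convex_hull by metis
  moreover have "{a..b} \<noteq> {}"
    using supp_m_nonempty[OF M] ab hull_subset[of "supp_m M" convex] by blast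
  ultimately show ?thesis using that by simp
qed

lemma conv_supp_len_le:
  assumes "supp_m M \<subseteq> {a..b}" "a \<le> b"
  shows "conv_supp_len M \<le> b - a"
proof -
  have hull: "convex hull (supp_m M) \<subseteq> {a..b}"
    by (rule hull_minimal[OF assms(1)]) (simp add: convex_real_interval)
  have "conv_supp_len M \<le> measure lborel {a..b}"
    unfolding conv_supp_len_def
  proof (cases "convex hull (supp_m M) \<in> sets lborel")
    case True
    then show "measure lborel (convex hull supp_m M) \<le> measure lborel {a..b}"
      by (rule measure_mono_fmeasurable[OF hull]) (metis cbox_interval fmeasurable_cbox)
  qed (simp add: measure_notin_sets)
  then show ?thesis using assms(2) by simp
qed

lemma even_moment_le_if_supp_m_subset:
  assumes M: "prob_m11 M" and supp: "supp_m M \<subseteq> {y - r..y + r}"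
  shows "(\<integral>w. (w - y)^(2*k) \<partial>M) \<le> r^(2*k)"
proof (rule prob_space.integral_le_const[OF prob_m11_prob_space[OF M]])
  show "AE w in M. (w - y)^(2*k) \<le> r^(2*k)"
    using AE_in_supp_m[OF M]
  proof (rule AE_mp, intro AE_I2 impI)
    fix w assume "w \<in> supp_m M"
    then have "\<bar>w - y\<bar> \<le> r" using supp by (auto simp: abs_le_iff)
    then have "\<bar>w - y\<bar>^(2*k) \<le> r^(2*k)" by (rule power_mono) simp
    then show "(w - y)^(2*k) \<le> r^(2*k)" by (simp add: power_even_abs)
  qed
qed (rule prob_m11_integrable_continuous[OF M], intro continuous_intros)

text \<open>Markov's inequality for the even moments: a ball around a point at distance
  \<open>\<rho> > R\<close> from \<open>y\<close> has mass at most \<open>(R/\<rho>)^(2k) \<longrightarrow> 0\<close>.\<close>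
lemma supp_m_subset_if_even_moments_le:
  assumes M: "prob_m11 M" and R: "R \<ge> 0"
    and moments: "\<And>k. (\<integral>w. (w - y)^(2*k) \<partial>M) \<le> R^(2*k)"
  shows "supp_m M \<subseteq> {y - R..y + R}"
proof
  interpret prob_space M using prob_m11_prob_space[OF M] .
  fix x assume x: "x \<in> supp_m M"
  show "x \<in> {y - R..y + R}"
  proof (rule ccontr)
    assume "x \<notin> {y - R..y + R}"
    then have far: "\<bar>x - y\<bar> > R" by auto
    define e where "e = (\<bar>x - y\<bar> - R) / 2"
    then have e_eq: "2 * e = \<bar>x - y\<bar> - R" by simp
    define B where "B = ball x e \<inter> {-1..1}"
    have e: "e > 0" using far e_eq by simp
    have B: "B \<in> sets M" unfolding B_def by (rule prob_m11_ball_sets[OF M])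
    have "emeasure M B > 0" using x e unfolding supp_m_def B_def by auto
    then have pos: "measure M B > 0" by (simp add: emeasure_eq_measure)
    have "measure M B * (R + e)^(2*k) \<le> R^(2*k)" for k
    proof -
      have "measure M B * (R + e)^(2*k) = (\<integral>w. indicator B w * (R + e)^(2*k) \<partial>M)"
        using B by simp
      also have "\<dots> \<le> (\<integral>w. (w - y)^(2*k) \<partial>M)"
      proof (rule integral_mono)
        show "integrable M (\<lambda>w. indicator B w * (R + e)^(2*k))"
          using B by (intro integrable_mult_left integrable_real_indicator) (auto simp: emeasure_eq_measure)
        show "integrable M (\<lambda>w. (w - y)^(2*k))"
          by (rule prob_m11_integrable_continuous[OF M]) (intro continuous_intros)
        fix w
        show "indicator B w * (R + e)^(2*k) \<le> (w - y)^(2*k)"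
        proof (cases "w \<in> B")
          case True
          then have "\<bar>x - w\<bar> < e" unfolding B_def by (simp add: dist_real_def)
          moreover have "\<bar>x - y\<bar> \<le> \<bar>x - w\<bar> + \<bar>w - y\<bar>"
            using abs_triangle_ineq[of "x - w" "w - y"] by simp
          ultimately have "R + e \<le> \<bar>w - y\<bar>" using e_eq by linarith
          then have "(R + e)^(2*k) \<le> \<bar>w - y\<bar>^(2*k)" using R e by (intro power_mono) auto
          then show ?thesis using True by (simp add: power_mult power_even_abs)
        qed (simp add: power_mult)
      qed
      also have "\<dots> \<le> R^(2*k)" by (rule moments)
      finally show ?thesis .
    qed
    then have "measure M B \<le> R^(2*k) / (R + e)^(2*k)" for k
      using R e by (simp add: pos_le_divide_eq add_nonneg_pos)
    then have "measure M B \<le> ((R / (R + e))^2)^k" for k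
      by (simp add: power_divide power_mult)
    moreover have "(\<lambda>k. ((R / (R + e))^2)^k) \<longlonglongrightarrow> 0"
      using R e by (intro LIMSEQ_power_zero) (simp add: abs_square_less_1)
    ultimately have "measure M B \<le> 0"
      by (intro LIMSEQ_le_const[of _ 0]) auto
    with pos show False by simp
  qed
qed

lemma binomial_ring_deriv_left:
  "(\<Sum>k\<le>n. real (n choose k) * (real k * a^(k-1)) * b^(n-k)) = real n * (a + b :: real)^(n-1)"
proof -
  have "((\<lambda>a. \<Sum>k\<le>n. real (n choose k) * a^k * b^(n-k)) has_real_derivative
      (\<Sum>k\<le>n. real (n choose k) * (real k * a^(k-1)) * b^(n-k))) (at a)"
    by (auto intro!: derivative_eq_intros sum.cong)
  moreover have "((\<lambda>a. (a + b)^n) has_real_derivative real n * (a + b)^(n-1)) (at a)"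
    by (auto intro!: derivative_eq_intros)
  ultimately show ?thesis
    unfolding binomial_ring by (rule DERIV_unique)
qed

lemma binomial_ring_deriv_right:
  "(\<Sum>k\<le>n. real (n choose k) * a^k * (real (n-k) * b^(n-k-1))) = real n * (a + b :: real)^(n-1)"
proof -
  have "((\<lambda>b. \<Sum>k\<le>n. real (n choose k) * a^k * b^(n-k)) has_real_derivative
      (\<Sum>k\<le>n. real (n choose k) * a^k * (real (n-k) * b^(n-k-1)))) (at b)"
    by (auto intro!: derivative_eq_intros sum.cong)
  moreover have "((\<lambda>b. (a + b)^n) has_real_derivative real n * (a + b)^(n-1)) (at b)"
    by (auto intro!: derivative_eq_intros)
  ultimately show ?thesis
    unfolding binomial_ring by (rule DERIV_unique)
qed

text \<open>Weak solutions of the linear transport equation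
  \<open>\<partial>\<^sub>t\<mu> + \<partial>\<^sub>w((c(t) - \<kappa> w) \<mu>) = 0\<close> on \<open>[-1,1]\<close>.\<close>

locale linear_drift =
  fixes \<mu> :: "real \<Rightarrow> real measure" and c :: "real \<Rightarrow> real" and \<kappa> :: real
  assumes prob: "\<And>t. t \<ge> 0 \<Longrightarrow> prob_m11 (\<mu> t)"
    and weakly_cont: "weakly_cont_m11 \<mu>"
    and c_cont: "continuous_on {0..} c"
    and weak_eq: "\<And>t \<phi> \<phi>'. t \<ge> 0 \<Longrightarrow> C1_m11 \<phi> \<phi>' \<Longrightarrow>
      (\<integral>w. \<phi> w \<partial>\<mu> t) =
        (\<integral>w. \<phi> w \<partial>\<mu> 0) + integral {0..t} (\<lambda>s. \<integral>w. \<phi>' w * (c s - \<kappa> * w) \<partial>\<mu> s)"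
begin

definition moment :: "nat \<Rightarrow> real \<Rightarrow> real" where
  "moment n t = (\<integral>w. w^n \<partial>\<mu> t)"

lemma continuous_on_moment: "continuous_on {0..} (moment n)"
proof -
  have "continuous_on {-1..1} (\<lambda>w::real. w^n)" by (intro continuous_intros)
  then show ?thesis using weakly_cont unfolding weakly_cont_m11_def moment_def[abs_def] by blast
qed

lemma integral_drift_power:
  assumes "t \<ge> 0"
  shows "(\<integral>w. real n * w^(n-1) * (c t - \<kappa> * w) \<partial>\<mu> t) =
    real n * c t * moment (n-1) t - real n * \<kappa> * moment n t"
proof -
  have "real n * w^(n-1) * (c t - \<kappa> * w) = real n * c t * w^(n-1) - real n * \<kappa> * w^n" for w
    by (cases n) (simp_all add: algebra_simps)
  moreover have "integrable (\<mu> t) (\<lambda>w. w^m)" for m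
    by (rule prob_m11_integrable_continuous[OF prob[OF assms]]) (intro continuous_intros)
  ultimately show ?thesis by (simp add: moment_def)
qed

lemma moment_has_derivative:
  assumes t: "t \<in> {0..T}"
  shows "(moment n has_real_derivative (\<integral>w. real n * w^(n-1) * (c t - \<kappa> * w) \<partial>\<mu> t))
    (at t within {0..T})"
proof -
  define G where "G s = (\<integral>w. real n * w^(n-1) * (c s - \<kappa> * w) \<partial>\<mu> s)" for s
  have "continuous_on {0..} (\<lambda>s. real n * c s * moment (n-1) s - real n * \<kappa> * moment n s)"
    by (intro continuous_intros c_cont continuous_on_moment)
  then have "continuous_on {0..} G"
    by (rule continuous_on_eq) (use integral_drift_power in \<open>simp add: G_def\<close>)
  then have "continuous_on {0..T} G"
    by (rule continuous_on_subset) auto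
  then have deriv: "((\<lambda>s. moment n 0 + integral {0..s} G) has_real_derivative G t) (at t within {0..T})"
    using t by (auto intro!: derivative_eq_intros integral_has_real_derivative)
  have "C1_m11 (\<lambda>w. w^n) (\<lambda>w. real n * w^(n-1))"
    unfolding C1_m11_def by (auto intro!: continuous_intros derivative_eq_intros)
  then have "moment n 0 + integral {0..s} G = moment n s" if "s \<ge> 0" for s
    using weak_eq[OF that] unfolding moment_def G_def by simp
  then have "(moment n has_real_derivative G t) (at t within {0..T})"
    by (intro has_field_derivative_transform_within[OF deriv zero_less_one t]) auto
  then show ?thesis unfolding G_def .
qed

lemma integral_poly_has_derivative:
  assumes t: "t \<in> {0..T}"
    and a: "\<And>j. j \<le> n \<Longrightarrow> (a j has_real_derivative a' j) (at t within {0..T})"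
  shows "((\<lambda>s. \<integral>w. (\<Sum>j\<le>n. a j s * w^j) \<partial>\<mu> s) has_real_derivative
      (\<integral>w. (\<Sum>j\<le>n. a' j * w^j + a j t * (real j * w^(j-1) * (c t - \<kappa> * w))) \<partial>\<mu> t))
    (at t within {0..T})"
proof -
  have P: "prob_m11 (\<mu> t)" using prob t by simp
  have expand: "(\<Sum>j\<le>n. a j s * moment j s) = (\<integral>w. (\<Sum>j\<le>n. a j s * w^j) \<partial>\<mu> s)"
    if "s \<ge> 0" for s
    by (subst integral_sum_continuous[OF prob[OF that]]) (auto intro!: continuous_intros simp: moment_def)
  have "((\<lambda>s. \<Sum>j\<le>n. a j s * moment j s) has_real_derivative
      (\<Sum>j\<le>n. a' j * moment j t + (\<integral>w. real j * w^(j-1) * (c t - \<kappa> * w) \<partial>\<mu> t) * a j t))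
    (at t within {0..T})"
    by (intro DERIV_sum DERIV_mult a moment_has_derivative[OF t]) simp
  also have "(\<Sum>j\<le>n. a' j * moment j t + (\<integral>w. real j * w^(j-1) * (c t - \<kappa> * w) \<partial>\<mu> t) * a j t)
      = (\<integral>w. (\<Sum>j\<le>n. a' j * w^j + a j t * (real j * w^(j-1) * (c t - \<kappa> * w))) \<partial>\<mu> t)"
  proof -
    have int: "integrable (\<mu> t) g" if "continuous_on {-1..1} g" for g :: "real \<Rightarrow> real"
      using prob_m11_integrable_continuous[OF P that] .
    have "a' j * moment j t + (\<integral>w. real j * w^(j-1) * (c t - \<kappa> * w) \<partial>\<mu> t) * a j t
        = (\<integral>w. a' j * w^j + a j t * (real j * w^(j-1) * (c t - \<kappa> * w)) \<partial>\<mu> t)" for j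
      by (subst Bochner_Integration.integral_add) (auto intro!: int continuous_intros simp: moment_def mult.commute)
    then show ?thesis
      by (subst integral_sum_continuous[OF P]) (auto intro!: continuous_intros)
  qed
  finally show ?thesis
    by (rule has_field_derivative_transform_within[OF _ zero_less_one t]) (use expand in auto)
qed

definition centre :: "real \<Rightarrow> real \<Rightarrow> real" where
  "centre y0 t = exp (- \<kappa> * t) * (y0 + integral {0..t} (\<lambda>s. exp (\<kappa> * s) * c s))"

lemma centre_0 [simp]: "centre y0 0 = y0"
  by (simp add: centre_def)

lemma centre_has_derivative:
  assumes t: "t \<in> {0..T}"
  shows "(centre y0 has_real_derivative c t - \<kappa> * centre y0 t) (at t within {0..T})"
proof -
  have "continuous_on {0..T} (\<lambda>s. exp (\<kappa> * s) * c s)"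
    using continuous_on_subset[OF c_cont, of "{0..T}"] by (auto intro!: continuous_intros)
  then have "(centre y0 has_real_derivative
      - \<kappa> * exp (- \<kappa> * t) * (y0 + integral {0..t} (\<lambda>s. exp (\<kappa> * s) * c s))
      + exp (- \<kappa> * t) * (exp (\<kappa> * t) * c t)) (at t within {0..T})"
    unfolding centre_def[abs_def] using t
    by (auto intro!: derivative_eq_intros integral_has_real_derivative simp: algebra_simps)
  moreover have "exp (- \<kappa> * t) * exp (\<kappa> * t) = 1"
    by (simp add: exp_minus_inverse[symmetric] exp_add[symmetric])
  ultimately show ?thesis
    by (simp add: centre_def algebra_simps)
qed

definition central_moment :: "nat \<Rightarrow> real \<Rightarrow> real \<Rightarrow> real" where
  "central_moment n y0 t = (\<integral>w. (w - centre y0 t)^n \<partial>\<mu> t)"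

lemma central_moment_has_derivative:
  assumes t: "t \<in> {0..T}"
  shows "(central_moment n y0 has_real_derivative - (real n * \<kappa>) * central_moment n y0 t) (at t within {0..T})"
proof -
  define y where "y = centre y0 t"
  define a where "a j s = real (n choose j) * (- centre y0 s)^(n-j)" for j s
  define a' where "a' j = real (n choose j) * (real (n-j) * (- y)^(n-j-1)) * - (c t - \<kappa> * y)" for j
  have expand: "(\<integral>w. (\<Sum>j\<le>n. a j s * w^j) \<partial>\<mu> s) = central_moment n y0 s" for s
    unfolding central_moment_def a_def using binomial_ring[of _ "- centre y0 s" n]
    by (simp add: mult_ac)
  have "(\<Sum>j\<le>n. a' j * w^j + a j t * (real j * w^(j-1) * (c t - \<kappa> * w)))
      = - (c t - \<kappa> * y) * (\<Sum>j\<le>n. real (n choose j) * w^j * (real (n-j) * (- y)^(n-j-1)))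
        + (c t - \<kappa> * w) * (\<Sum>j\<le>n. real (n choose j) * (real j * w^(j-1)) * (- y)^(n-j))" for w
    unfolding a_def a'_def y_def sum_distrib_left sum.distrib[symmetric]
    by (rule sum.cong) (simp_all add: algebra_simps)
  also have "\<dots> w = - (real n * \<kappa>) * (w - y)^n" for w
    unfolding binomial_ring_deriv_left binomial_ring_deriv_right
    by (cases n) (simp_all add: algebra_simps)
  finally have pointwise: "(\<Sum>j\<le>n. a' j * w^j + a j t * (real j * w^(j-1) * (c t - \<kappa> * w)))
      = - (real n * \<kappa>) * (w - y)^n" for w .
  have "((\<lambda>s. \<integral>w. (\<Sum>j\<le>n. a j s * w^j) \<partial>\<mu> s) has_real_derivative
      (\<integral>w. (\<Sum>j\<le>n. a' j * w^j + a j t * (real j * w^(j-1) * (c t - \<kappa> * w))) \<partial>\<mu> t))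
    (at t within {0..T})"
    unfolding a'_def y_def
    by (intro integral_poly_has_derivative[OF t])
       (auto simp: a_def intro!: derivative_eq_intros centre_has_derivative[OF t])
  then show ?thesis
    unfolding expand pointwise by (simp add: central_moment_def[abs_def] y_def)
qed

lemma central_moment_eq:
  assumes "t \<ge> 0"
  shows "central_moment n y0 t = central_moment n y0 0 * exp (- (real n * \<kappa>) * t)"
proof -
  have "\<exists>k. \<forall>s\<in>{0..t}. central_moment n y0 s * exp (real n * \<kappa> * s) = k"
  proof (rule has_field_derivative_zero_constant)
    fix s assume s: "s \<in> {0..t}"
    show "((\<lambda>s. central_moment n y0 s * exp (real n * \<kappa> * s)) has_real_derivative 0) (at s within {0..t})"
      using central_moment_has_derivative[OF s]
      by (auto intro!: derivative_eq_intros simp: algebra_simps)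
  qed (rule convex_real_interval)
  then have "central_moment n y0 t * exp (real n * \<kappa> * t) = central_moment n y0 0"
    using assms by force
  then show ?thesis
    by (simp add: exp_minus field_simps)
qed

theorem conv_supp_len_decay:
  assumes t: "t \<ge> 0"
  shows "conv_supp_len (\<mu> t) \<le> conv_supp_len (\<mu> 0) * exp (- \<kappa> * t)"
proof -
  have P0: "prob_m11 (\<mu> 0)" and Pt: "prob_m11 (\<mu> t)" using prob t by auto
  obtain a b where ab: "a \<le> b" "convex hull (supp_m (\<mu> 0)) = {a..b}"
    using convex_hull_supp_m_interval[OF P0] .
  define y0 where "y0 = (a + b) / 2"
  define r where "r = (b - a) / 2"
  define R where "R = r * exp (- \<kappa> * t)"
  have R: "R \<ge> 0" using ab(1) by (simp add: R_def r_def)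
  have "y0 - r = a" "y0 + r = b" by (simp_all add: y0_def r_def field_simps)
  then have "supp_m (\<mu> 0) \<subseteq> {y0 - r..y0 + r}"
    using ab(2) hull_subset[of "supp_m (\<mu> 0)" convex] by simp
  then have "central_moment (2*k) y0 0 \<le> r^(2*k)" for k
    unfolding central_moment_def by (simp add: even_moment_le_if_supp_m_subset[OF P0])
  then have "central_moment (2*k) y0 t \<le> R^(2*k)" for k
    unfolding central_moment_eq[OF t, of "2*k"] R_def
    by (simp add: power_mult_distrib exp_of_nat_mult[symmetric] mult_right_mono algebra_simps)
  then have "supp_m (\<mu> t) \<subseteq> {centre y0 t - R..centre y0 t + R}"
    unfolding central_moment_def by (intro supp_m_subset_if_even_moments_le[OF Pt R])
  then have "conv_supp_len (\<mu> t) \<le> 2 * R"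
    using conv_supp_len_le R by fastforce
  moreover have "conv_supp_len (\<mu> 0) = 2 * r"
    using ab by (simp add: conv_supp_len_def r_def)
  ultimately show ?thesis by (simp add: R_def)
qed

end

theorem proposition4p2:
  fixes p \<alpha> :: real and N :: nat
    and h fS fNS mS :: "nat \<Rightarrow> real"
    and f :: "nat \<Rightarrow> real \<Rightarrow> real measure"
    and f0NS :: "nat \<Rightarrow> real measure"
  assumes p: "0 \<le> p" "p < 1"
    and alpha: "0 \<le> \<alpha>" "\<alpha> \<le> 1"
    and N: "N \<ge> 1"
    and h_mono: "\<And>i j. 1 \<le> i \<Longrightarrow> i < j \<Longrightarrow> j \<le> N \<Longrightarrow> h i < h j"
    and h_range: "0 \<le> h 1" "h N \<le> 1"
    and fS_nonneg: "\<And>j. 1 \<le> j \<Longrightarrow> j \<le> N \<Longrightarrow> fS j \<ge> 0"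
    and fNS_nonneg: "\<And>j. 1 \<le> j \<Longrightarrow> j \<le> N \<Longrightarrow> fNS j \<ge> 0"
    and fS_sum: "(\<Sum>j=1..N. fS j) = 1"
    and fNS_sum: "(\<Sum>j=1..N. fNS j) = 1"
    and f0_top: "\<alpha> * fS N + (1 - \<alpha>) * fNS N > 0"
    and mS: "\<And>j. 1 \<le> j \<Longrightarrow> j \<le> N \<Longrightarrow> mS j \<in> {-1..1}"
    and f_prob: "\<And>i t. 1 \<le> i \<Longrightarrow> i \<le> N \<Longrightarrow> t \<ge> 0 \<Longrightarrow> prob_m11 (f i t)"
    and f0_prob: "\<And>i. 1 \<le> i \<Longrightarrow> i \<le> N \<Longrightarrow> prob_m11 (f0NS i)"
    and f_cont: "\<And>i. 1 \<le> i \<Longrightarrow> i \<le> N \<Longrightarrow> weakly_cont_m11 (f i)"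
    and f_init: "\<And>i. 1 \<le> i \<Longrightarrow> i \<le> N \<Longrightarrow> f i 0 = f0NS i"
    and weak_sol: "\<And>i t \<phi> \<phi>'. 1 \<le> i \<Longrightarrow> i \<le> N \<Longrightarrow> t \<ge> 0 \<Longrightarrow> C1_m11 \<phi> \<phi>' \<Longrightarrow>
        (\<integral>w. \<phi> w \<partial>(f i t)) = (\<integral>w. \<phi> w \<partial>(f0NS i)) +
          integral {0..t} (\<lambda>s. \<integral>w. \<phi>' w *
            (p * ((\<alpha> * (\<Sum>j=1..N. fS j * mS j)
                   + (1 - \<alpha>) * (\<Sum>j=1..N. fNS j * (\<integral>v. v \<partial>(f j s)))) - w)
             + (1 - p) * ((\<alpha> * (\<Sum>j=i..N. fS j * mS j)
                   + (1 - \<alpha>) * (\<Sum>j=i..N. fNS j * (\<integral>v. v \<partial>(f j s))))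
                 - (\<Sum>j=i..N. \<alpha> * fS j + (1 - \<alpha>) * fNS j) * w)) \<partial>(f i s))"
  shows "\<And>i t. 1 \<le> i \<Longrightarrow> i \<le> N \<Longrightarrow> t \<ge> 0 \<Longrightarrow>
     conv_supp_len (f i t) \<le> conv_supp_len (f0NS i) *
       exp (- (p + (1 - p) * (\<Sum>j=i..N. \<alpha> * fS j + (1 - \<alpha>) * fNS j)) * t)"
proof -
  fix i :: nat and t :: real assume i: "1 \<le> i" "i \<le> N" and t: "t \<ge> 0"
  define F where "F = (\<Sum>j=i..N. \<alpha> * fS j + (1 - \<alpha>) * fNS j)"
  define m where
    "m s = \<alpha> * (\<Sum>j=1..N. fS j * mS j) + (1 - \<alpha>) * (\<Sum>j=1..N. fNS j * (\<integral>v. v \<partial>(f j s)))" for s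
  define \<beta> where
    "\<beta> s = \<alpha> * (\<Sum>j=i..N. fS j * mS j) + (1 - \<alpha>) * (\<Sum>j=i..N. fNS j * (\<integral>v. v \<partial>(f j s)))" for s
  have "linear_drift (f i) (\<lambda>s. p * m s + (1 - p) * \<beta> s) (p + (1 - p) * F)"
  proof unfold_locales
    show "prob_m11 (f i s)" if "s \<ge> 0" for s using f_prob i that by blast
    show "weakly_cont_m11 (f i)" using f_cont i by blast
    have "continuous_on {0..} (\<lambda>s. \<integral>v. v \<partial>(f j s))" if "j \<in> {1..N}" for j
      using f_cont[of j] that continuous_on_id unfolding weakly_cont_m11_def by auto
    then show "continuous_on {0..} (\<lambda>s. p * m s + (1 - p) * \<beta> s)"
      unfolding m_def \<beta>_def using i by (intro continuous_intros) auto
    fix s :: real and \<phi> \<phi>' assume s: "s \<ge> 0" and \<phi>: "C1_m11 \<phi> \<phi>'"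
    have drift: "p * (m s - w) + (1 - p) * (\<beta> s - F * w)
        = p * m s + (1 - p) * \<beta> s - (p + (1 - p) * F) * w" for w and s :: real
      by (simp add: algebra_simps)
    show "(\<integral>w. \<phi> w \<partial>f i s) = (\<integral>w. \<phi> w \<partial>f i 0) + integral {0..s}
        (\<lambda>s. \<integral>w. \<phi>' w * (p * m s + (1 - p) * \<beta> s - (p + (1 - p) * F) * w) \<partial>f i s)"
      using weak_sol[OF i s \<phi>, folded m_def \<beta>_def F_def, unfolded drift] f_init[OF i] by simp
  qed
  then have "conv_supp_len (f i t) \<le> conv_supp_len (f i 0) * exp (- (p + (1 - p) * F) * t)"
    by (rule linear_drift.conv_supp_len_decay[OF _ t])
  then show "conv_supp_len (f i t) \<le> conv_supp_len (f0NS i) *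
       exp (- (p + (1 - p) * (\<Sum>j=i..N. \<alpha> * fS j + (1 - \<alpha>) * fNS j)) * t)"
    using f_init[OF i] unfolding F_def by simp
qed

end
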